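(* Let $x:\mathbb{Z}^2\to\mathbb{RP}^n$ be a Q-net in general position (in particular, no quadrilateral strip of $x$ is contained in a plane). Then the following are equivalent: (i) $x$ is a multi-Q-net. (ii) Every two parameter lines of $x$ of the same direction are in perspective with respect to a point, i.e. for all $i_0\neq i_1$ there is a point $c$ such that $x_{i_0,j},x_{i_1,j},c$ are collinear for all $j$, and for all $j_0\ne j_1$ there is a point $c'$ such that $x_{i,j_0},x_{i,j_1},c'$ are collinear for all $i$. (iii) Every two neighboring parameter lines of $x$ ($x_{i,\cdot}$ and $x_{i+1,\cdot}$, resp. $x_{\cdot,j}$ and $x_{\cdot,j+1}$) are in perspective with respect to a point. (iv) There exist $\mathbf{p},\mathbf{q}:\mathbb{Z}\to\mathbb{R}^{n+1}$ such that $x_{i,j}=[\mathbf{p}_i+\mathbf{q}_j]$ for all $i,j$. (v) Both Laplace transforms of $x$ degenerate to curves, i.e. $y^1_{i,j}$ is independent of $j$ and $y^2_{i,j}$ is independent of $i$.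
   Context: A Q-net is a map $x:\mathbb{Z}^2\to\mathbb{RP}^n$, $x_{i,j}:=x(i,j)$, such that for all $i,j$ the points $x_{i,j},x_{i+1,j},x_{i+1,j+1},x_{i,j+1}$ are coplanar. A multi-Q-net is a map $x:\mathbb{Z}^2\to\mathbb{RP}^n$ such that for all $i_0\neq i_1$, $j_0\neq j_1$ the points $x_{i_0,j_0},x_{i_0,j_1},x_{i_1,j_1},x_{i_1,j_0}$ are coplanar. For an elementary quadrilateral of a Q-net, the Laplace points are $y^1_{i,j}$ = the intersection of the lines $x_{i,j}x_{i+1,j}$ and $x_{i,j+1}x_{i+1,j+1}$, and $y^2_{i,j}$ = the intersection of the lines $x_{i,j}x_{i,j+1}$ and $x_{i+1,j}x_{i+1,j+1}$; the nets $y^1,y^2$ are the Laplace transforms of $x$. For $\mathbf{v}\in\mathbb{R}^{n+1}\setminus\{0\}$, $[\mathbf{v}]$ denotes the corresponding point of $\mathbb{RP}^n$. The parameter lines of $x$ are the polygons $x_{i,\cdot}$ and $x_{\cdot,j}$. *)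

theory Defs
  imports "HOL-Analysis.Analysis"
begin

text \<open>Homogeneous coordinates: a point of RP^n is represented by a nonzero vector of
  real^'m, where CARD('m) = n+1.  A net is a map int => int => real^'m with nonzero values;
  the point x_{i,j} is [x i j].\<close>

definition proj_net :: "(int \<Rightarrow> int \<Rightarrow> real^'m) \<Rightarrow> bool" where
  "proj_net x \<longleftrightarrow> (\<forall>i j. x i j \<noteq> 0)"

definition proj_eq :: "real^'m \<Rightarrow> real^'m \<Rightarrow> bool" where
  "proj_eq u v \<longleftrightarrow> u \<noteq> 0 \<and> v \<noteq> 0 \<and> (\<exists>c. c \<noteq> 0 \<and> u = c *\<^sub>R v)"

definition proj_collinear :: "real^'m \<Rightarrow> real^'m \<Rightarrow> real^'m \<Rightarrow> bool" where
  "proj_collinear a b c \<longleftrightarrow> dim {a, b, c} \<le> 2"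

definition proj_coplanar :: "real^'m \<Rightarrow> real^'m \<Rightarrow> real^'m \<Rightarrow> real^'m \<Rightarrow> bool" where
  "proj_coplanar a b c d \<longleftrightarrow> dim {a, b, c, d} \<le> 3"

definition Q_net :: "(int \<Rightarrow> int \<Rightarrow> real^'m) \<Rightarrow> bool" where
  "Q_net x \<longleftrightarrow> proj_net x \<and>
     (\<forall>i j. proj_coplanar (x i j) (x (i+1) j) (x (i+1) (j+1)) (x i (j+1)))"

definition multi_Q_net :: "(int \<Rightarrow> int \<Rightarrow> real^'m) \<Rightarrow> bool" where
  "multi_Q_net x \<longleftrightarrow> proj_net x \<and>
     (\<forall>i0 i1 j0 j1. i0 \<noteq> i1 \<longrightarrow> j0 \<noteq> j1 \<longrightarrow>
        proj_coplanar (x i0 j0) (x i0 j1) (x i1 j1) (x i1 j0))"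

definition in_perspective :: "(int \<Rightarrow> real^'m) \<Rightarrow> (int \<Rightarrow> real^'m) \<Rightarrow> bool" where
  "in_perspective P Q \<longleftrightarrow> (\<exists>c. c \<noteq> 0 \<and> (\<forall>k. proj_collinear (P k) (Q k) c))"

text \<open>Laplace points, represented as the intersection of the two lines viewed as
  2-dimensional linear subspaces (under general position this is a 1-dimensional
  subspace, i.e. a point of RP^n).\<close>
definition laplace1 :: "(int \<Rightarrow> int \<Rightarrow> real^'m) \<Rightarrow> int \<Rightarrow> int \<Rightarrow> (real^'m) set" where
  "laplace1 x i j = span {x i j, x (i+1) j} \<inter> span {x i (j+1), x (i+1) (j+1)}"

definition laplace2 :: "(int \<Rightarrow> int \<Rightarrow> real^'m) \<Rightarrow> int \<Rightarrow> int \<Rightarrow> (real^'m) set" where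
  "laplace2 x i j = span {x i j, x i (j+1)} \<inter> span {x (i+1) j, x (i+1) (j+1)}"

definition general_position :: "(int \<Rightarrow> int \<Rightarrow> real^'m) \<Rightarrow> bool" where
  "general_position x \<longleftrightarrow>
     (\<forall>i j. \<not> proj_collinear (x i j) (x (i+1) j) (x (i+1) (j+1))
          \<and> \<not> proj_collinear (x i j) (x (i+1) j) (x i (j+1))
          \<and> \<not> proj_collinear (x i j) (x (i+1) (j+1)) (x i (j+1))
          \<and> \<not> proj_collinear (x (i+1) j) (x (i+1) (j+1)) (x i (j+1)))
   \<and> (\<forall>i. dim ((\<lambda>j. x i j) ` UNIV \<union> (\<lambda>j. x (i+1) j) ` UNIV) \<ge> 4)
   \<and> (\<forall>j. dim ((\<lambda>i. x i j) ` UNIV \<union> (\<lambda>i. x i (j+1)) ` UNIV) \<ge> 4)"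

end

theory Submission
  imports Defs
begin

text \<open>
  For a translation net \<open>x(i,j) = [p(i) + q(j)]\<close> everything is explicit: the four points of
  any quadrilateral lie in the span of three of the vectors \<open>p(i) + q(j)\<close>, the parameter lines
  \<open>x(i0,\<cdot>)\<close> and \<open>x(i1,\<cdot>)\<close> are in perspective from \<open>[p(i0) - p(i1)]\<close>, and the Laplace point
  \<open>y1(i,j)\<close> is \<open>[p(i+1) - p(i)]\<close>, independent of \<open>j\<close>.

  Conversely, in a multi-Q-net the lines through \<open>x(i,j)\<close> and \<open>x(i+1,j)\<close> meet pairwise; since
  the strip is not planar they all pass through one point, so neighbouring parameter lines are
  in perspective. A Laplace point that does not depend on \<open>j\<close> is such a common point directly.

  Finally, given the perspectivity centres, rescale the homogeneous coordinates along the two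
  axes \<open>x(\<cdot>,0)\<close> and \<open>x(0,\<cdot>)\<close> so that consecutive representatives differ by multiples of the
  centres. The translation net built from the two axes then has all its edges on the right lines,
  and general position pins down the fourth vertex of each parallelogram, so by induction over
  the quadrilaterals it represents \<open>x\<close> everywhere.
\<close>

section \<open>Lines and planes in a real vector space\<close>

lemma span_insert_Int_span_insert:
  fixes u w :: "'a::real_vector"
  assumes "u \<notin> span (insert w S)"
  shows "span (insert u S) \<inter> span (insert w S) = span S"
proof
  show "span S \<subseteq> span (insert u S) \<inter> span (insert w S)"
    by (simp add: span_mono subset_insertI)
  show "span (insert u S) \<inter> span (insert w S) \<subseteq> span S"
  proof
    fix y assume y: "y \<in> span (insert u S) \<inter> span (insert w S)"
    then obtain k where k: "y - k *\<^sub>R u \<in> span S" by (auto simp: span_breakdown_eq)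
    have "k = 0"
    proof (rule ccontr)
      assume "k \<noteq> 0"
      have "y - k *\<^sub>R u \<in> span (insert w S)"
        using k span_mono[of S "insert w S"] by blast
      then have "k *\<^sub>R u \<in> span (insert w S)"
        using y span_diff by fastforce
      then have "(1/k) *\<^sub>R (k *\<^sub>R u) \<in> span (insert w S)" by (rule span_scale)
      then show False using assms \<open>k \<noteq> 0\<close> by simp
    qed
    then show "y \<in> span S" using k by simp
  qed
qed

lemma span_singleton_sym:
  fixes u v :: "'a::real_vector"
  assumes "v \<in> span {u}" "v \<noteq> 0"
  shows "u \<in> span {v}"
proof -
  obtain k where "v = k *\<^sub>R u" using assms(1) by (auto simp: span_singleton)
  with assms(2) have "u = (1/k) *\<^sub>R v" by auto
  then show ?thesis by (simp add: span_base span_scale)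
qed

lemma span_singleton_eq:
  fixes u v :: "'a::real_vector"
  assumes "v \<in> span {u}" "v \<noteq> 0"
  shows "span {v} = span {u}"
  using assms span_singleton_sym by (auto simp: span_eq)

lemma in_span_trans:
  fixes u v :: "'a::real_vector"
  shows "u \<in> span {v} \<Longrightarrow> v \<in> span S \<Longrightarrow> u \<in> span S"
  using span_minimal[of "{v}" "span S"] by auto

lemma not_in_span_singleton_if_not_in_span:
  fixes a c :: "'a::real_vector"
  assumes "c \<noteq> 0" "c \<in> span S" "a \<notin> span S"
  shows "c \<notin> span {a}"
proof
  assume "c \<in> span {a}"
  then have "a \<in> span {c}" using assms(1) by (rule span_singleton_sym)
  also have "span {c} \<subseteq> span S" using assms(2) by (simp add: span_minimal)
  finally show False using assms(3) by blast
qed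

lemma span_pair_cong:
  fixes a b a' b' :: "'a::real_vector"
  assumes "span {a} = span {a'}" "span {b} = span {b'}"
  shows "span {a, b} = span {a', b'}"
  by (simp only: insert_is_Un[of a "{b}"] insert_is_Un[of a' "{b'}"] span_Un assms)

lemma span_Un_span:
  fixes A B :: "'a::real_vector set"
  shows "span (span A \<union> span B) = span (A \<union> B)"
  by (simp add: span_Un span_span)

lemma subspace_dim_2_eq_span_pair:
  fixes u w :: "'a::euclidean_space"
  assumes "subspace L" "dim L = 2" "u \<in> L" "w \<in> L" "u \<noteq> 0" "w \<notin> span {u}"
  shows "L = span {u, w}"
proof
  have "independent {u}" using assms(5) by simp
  then have "independent {w, u}" by (rule independent_insertI[OF assms(6)])
  moreover have "w \<noteq> u"
    using assms(6) span_base[of u "{u}"] by blast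
  ultimately have "L \<subseteq> span {w, u}"
    using card_ge_dim_independent[of "{w, u}" L] assms(2-4) by simp
  then show "L \<subseteq> span {u, w}" by (simp add: insert_commute)
  show "span {u, w} \<subseteq> L" using assms(1,3,4) by (intro span_minimal) auto
qed

lemma two_dim_subspaces_meet:
  fixes S T :: "'a::euclidean_space set"
  assumes "subspace S" "subspace T" "dim S = 2" "dim T = 2" "dim (S \<union> T) \<le> 3"
  shows "\<exists>v. v \<noteq> 0 \<and> v \<in> S \<inter> T"
proof -
  have "dim {x + y |x y. x \<in> S \<and> y \<in> T} + dim (S \<inter> T) = 4"
    using dim_sums_Int[OF assms(1,2)] assms(3,4) by simp
  moreover have "{x + y |x y. x \<in> S \<and> y \<in> T} = span (S \<union> T)"
    using assms(1,2) by (simp add: span_Un span_eq_iff[THEN iffD2])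
  ultimately have "dim (S \<union> T) + dim (S \<inter> T) = 4" by (simp add: dim_span)
  then have "dim (S \<inter> T) \<noteq> 0" using assms(5) by linarith
  then show ?thesis unfolding dim_eq_0 by blast
qed

lemma pairwise_meeting_lines_concurrent_or_coplanar:
  fixes L :: "'i \<Rightarrow> 'a::euclidean_space set"
  assumes sub: "\<And>j. subspace (L j)" and dim2: "\<And>j. dim (L j) = 2"
    and meet: "\<And>j k. \<exists>v. v \<noteq> 0 \<and> v \<in> L j \<inter> L k"
    and distinct: "L j0 \<noteq> L j1"
  shows "(\<exists>c. c \<noteq> 0 \<and> (\<forall>j. c \<in> L j)) \<or> (\<forall>j. L j \<subseteq> span (L j0 \<union> L j1))"
proof -
  let ?P = "span (L j0 \<union> L j1)"
  have in_plane: "span {u, w} \<subseteq> ?P" if "u \<in> L j0 \<union> L j1" "w \<in> ?P" for u w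
    using that by (intro span_minimal) (auto intro: span_base)
  obtain c where c: "c \<noteq> 0" "c \<in> L j0" "c \<in> L j1" using meet by blast
  have line_through_c: "L j = span {c, v}" if "c \<in> L j" "v \<in> L j" "v \<notin> span {c}" for j v
    using subspace_dim_2_eq_span_pair[OF sub dim2 that(1,2) c(1) that(3)] .
  have only_c: "v \<in> span {c}" if "v \<in> L j0" "v \<in> L j1" for v
    using line_through_c[of j0 v] line_through_c[of j1 v] c distinct that by fastforce
  have span_in_line: "span {v} \<subseteq> L j" if "v \<in> L j" for v j
    using that sub by (intro span_minimal) auto
  show ?thesis
  proof (cases "\<forall>j. c \<in> L j")
    case True
    then show ?thesis using c(1) by blast
  next
    case False
    then obtain k where k: "c \<notin> L k" by blast
    have off_c: "L j \<subseteq> ?P" if "c \<notin> L j" for j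
    proof -
      obtain u where u: "u \<noteq> 0" "u \<in> L j" "u \<in> L j0" using meet by blast
      obtain w where w: "w \<noteq> 0" "w \<in> L j" "w \<in> L j1" using meet by blast
      have "w \<notin> span {u}"
      proof
        assume "w \<in> span {u}"
        then have "w \<in> span {c}" using only_c span_in_line u(3) w(3) by blast
        then have "c \<in> L j" using span_singleton_sym w(1,2) span_in_line by blast
        then show False using that by blast
      qed
      then have "L j = span {u, w}" by (rule subspace_dim_2_eq_span_pair[OF sub dim2 u(2) w(2) u(1)])
      also have "\<dots> \<subseteq> ?P" using u(3) w(3) by (intro in_plane) (auto intro: span_base)
      finally show ?thesis .
    qed
    have "L j \<subseteq> ?P" for j
    proof (cases "c \<in> L j")
      case True
      obtain e where e: "e \<noteq> 0" "e \<in> L j" "e \<in> L k" using meet by blast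
      have "e \<notin> span {c}" using e k span_singleton_sym span_in_line by blast
      then have "L j = span {c, e}" using line_through_c True e(2) by blast
      also have "\<dots> \<subseteq> ?P" using c(2) e(3) off_c[OF k] by (intro in_plane) auto
      finally show ?thesis .
    qed (rule off_c)
    then show ?thesis by blast
  qed
qed

lemma lift_across_centre:
  fixes a b c u :: "'a::real_vector"
  assumes "c \<in> span {a, b}" "c \<notin> span {a}" "c \<notin> span {b}" "u \<in> span {a}" "u \<noteq> 0"
  shows "\<exists>w. w \<in> span {b} \<and> w \<noteq> 0 \<and> w - u \<in> span {c}"
proof -
  obtain \<kappa> where \<kappa>: "c - \<kappa> *\<^sub>R a \<in> span {b}" using assms(1) by (auto simp: span_breakdown_eq)
  obtain t where t: "u = t *\<^sub>R a" using assms(4) by (auto simp: span_singleton)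
  have "\<kappa> \<noteq> 0" using \<kappa> assms(3) by auto
  define w where "w = u - (t / \<kappa>) *\<^sub>R c"
  have "w = (- t / \<kappa>) *\<^sub>R (c - \<kappa> *\<^sub>R a)"
    using \<open>\<kappa> \<noteq> 0\<close> by (simp add: w_def t algebra_simps)
  then have "w \<in> span {b}" using \<kappa> span_scale by metis
  moreover have "w - u \<in> span {c}" by (simp add: w_def span_base span_scale span_neg)
  moreover have "w \<noteq> 0"
  proof
    assume "w = 0"
    then have "u \<in> span {c}" by (simp add: w_def span_base span_scale)
    then have "c \<in> span {u}" using assms(5) by (rule span_singleton_sym)
    then show False using assms(2,4,5) span_singleton_eq by blast
  qed
  ultimately show ?thesis by blast
qed

lemma parallelogram_fourth_vertex:
  fixes a b c d A B C D :: "'a::real_vector"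
  assumes "d \<notin> span {b, c}" "d \<notin> span {a, b}"
    and "A \<in> span {a}" "B \<in> span {b}" "D \<in> span {d}" "D \<noteq> 0"
    and "A + C = B + D" "C - B \<in> span {b, c}" "C - D \<in> span {d, c}"
  shows "C \<in> span {c} \<and> C \<noteq> 0"
proof
  have "C = D + (C - D)" "C = B + (C - B)" by simp_all
  moreover have "D \<in> span {d, c}" "B \<in> span {b, c}"
    using assms(4,5) span_mono[of "{d}" "{d, c}"] span_mono[of "{b}" "{b, c}"] by auto
  ultimately have "C \<in> span (insert d {c}) \<inter> span (insert b {c})"
    using assms(8,9) span_add by (metis IntI)
  then show "C \<in> span {c}" using span_insert_Int_span_insert[of d b "{c}"] assms(1) by blast
  show "C \<noteq> 0"
  proof
    assume "C = 0"
    then have "D = A - B" using assms(7) by (simp add: algebra_simps)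
    moreover have "A \<in> span {a, b}" "B \<in> span {a, b}"
      using assms(3,4) span_mono[of "{a}" "{a, b}"] span_mono[of "{b}" "{a, b}"] by auto
    ultimately have "D \<in> span {a, b}" by (simp add: span_diff)
    moreover have "d \<in> span {D}" using assms(5,6) by (rule span_singleton_sym)
    ultimately have "d \<in> span {a, b}" using span_minimal[of "{D}" "span {a, b}"] by auto
    then show False using assms(2) by blast
  qed
qed

section \<open>Integer sequences and grids\<close>

lemma dependent_int_choice:
  fixes V :: "int \<Rightarrow> 'a \<Rightarrow> bool" and R :: "int \<Rightarrow> 'a \<Rightarrow> 'a \<Rightarrow> bool"
  assumes V0: "V 0 a"
    and forward: "\<And>i u. V i u \<Longrightarrow> \<exists>w. V (i+1) w \<and> R i u w"
    and backward: "\<And>i w. V (i+1) w \<Longrightarrow> \<exists>u. V i u \<and> R i u w"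
  shows "\<exists>s. s 0 = a \<and> (\<forall>i. V i (s i) \<and> R i (s i) (s (i+1)))"
proof -
  have "\<exists>w. V (int (Suc n)) w \<and> R (int n) u w" if "V (int n) u" for n u
    using forward[of "int n" u] that by (simp add: add.commute)
  then have "\<exists>f. \<forall>n. (V (int n) (f n) \<and> (n = 0 \<longrightarrow> f n = a)) \<and> R (int n) (f n) (f (Suc n))"
    by (intro dependent_nat_choice) (use V0 in auto)
  then obtain f where f: "\<And>n. (V (int n) (f n) \<and> (n = 0 \<longrightarrow> f n = a)) \<and> R (int n) (f n) (f (Suc n))"
    by blast
  have "\<exists>u. V (- int (Suc n)) u \<and> R (- int (Suc n)) u w" if "V (- int n) w" for n w
    using backward[of "- int (Suc n)" w] that by simp
  then have "\<exists>g. \<forall>n. (V (- int n) (g n) \<and> (n = 0 \<longrightarrow> g n = a)) \<and> R (- int (Suc n)) (g (Suc n)) (g n)"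
    by (intro dependent_nat_choice) (use V0 in auto)
  then obtain g where g: "\<And>n. (V (- int n) (g n) \<and> (n = 0 \<longrightarrow> g n = a)) \<and> R (- int (Suc n)) (g (Suc n)) (g n)"
    by blast
  define s where "s i = (if 0 \<le> i then f (nat i) else g (nat (- i)))" for i
  have "V i (s i) \<and> R i (s i) (s (i+1))" for i
  proof (cases "0 \<le> i")
    case True
    then show ?thesis using f[of "nat i"] by (simp add: s_def nat_add_distrib)
  next
    case False
    define n where "n = nat (- i - 1)"
    have i: "i = - int (Suc n)" using False by (simp add: n_def)
    have "nat (- i) = Suc n" using i by simp
    then have "s i = g (Suc n)" using False by (simp add: s_def)
    moreover have "s (i+1) = g n" using i f[of 0] g[of 0] by (auto simp: s_def)
    ultimately show ?thesis using g[of n] g[of "Suc n"] i by simp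
  qed
  moreover have "s 0 = a" using f[of 0] by (simp add: s_def)
  ultimately show ?thesis by blast
qed

lemma int_grid_induct:
  fixes P :: "int \<Rightarrow> int \<Rightarrow> bool"
  assumes axis_i: "\<And>i. P i 0" and axis_j: "\<And>j. P 0 j"
    and NE: "\<And>i j. P i j \<Longrightarrow> P (i+1) j \<Longrightarrow> P i (j+1) \<Longrightarrow> P (i+1) (j+1)"
    and SE: "\<And>i j. P i j \<Longrightarrow> P i (j+1) \<Longrightarrow> P (i+1) (j+1) \<Longrightarrow> P (i+1) j"
    and NW: "\<And>i j. P i j \<Longrightarrow> P (i+1) j \<Longrightarrow> P (i+1) (j+1) \<Longrightarrow> P i (j+1)"
    and SW: "\<And>i j. P (i+1) j \<Longrightarrow> P i (j+1) \<Longrightarrow> P (i+1) (j+1) \<Longrightarrow> P i j"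
  shows "P i j"
proof -
  have up: "P (i+1) j" if column: "\<And>j. P i j" for i j
  proof (induction j rule: int_induct[where k = 0])
    case base show ?case by (rule axis_i)
  next
    case (step1 j) then show ?case using NE column by blast
  next
    case (step2 j) then show ?case using SE[of i "j - 1"] column by simp
  qed
  have down: "P (i-1) j" if column: "\<And>j. P i j" for i j
  proof (induction j rule: int_induct[where k = 0])
    case base show ?case by (rule axis_i)
  next
    case (step1 j) then show ?case using NW[of "i - 1" j] column by simp
  next
    case (step2 j) then show ?case using SW[of "i - 1" "j - 1"] column by simp
  qed
  show ?thesis
  proof (induction i arbitrary: j rule: int_induct[where k = 0])
    case base show ?case by (rule axis_j)
  next
    case (step1 i) then show ?case using up by blast
  next
    case (step2 i) then show ?case using down by blast
  qed
qed

lemma lift_polygon_through_centres: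
  fixes a c :: "int \<Rightarrow> 'a::real_vector"
  assumes "\<And>i. c i \<in> span {a i, a (i+1)}" "\<And>i. c i \<notin> span {a i}" "\<And>i. c i \<notin> span {a (i+1)}"
    and "a 0 \<noteq> 0"
  shows "\<exists>A. A 0 = a 0 \<and> (\<forall>i. (A i \<in> span {a i} \<and> A i \<noteq> 0) \<and> A (i+1) - A i \<in> span {c i})"
proof (rule dependent_int_choice)
  show "a 0 \<in> span {a 0} \<and> a 0 \<noteq> 0" using assms(4) by (simp add: span_base)
  show "\<exists>w. (w \<in> span {a (i+1)} \<and> w \<noteq> 0) \<and> w - u \<in> span {c i}"
    if "u \<in> span {a i} \<and> u \<noteq> 0" for i u
    using lift_across_centre[of "c i" "a i" "a (i+1)" u] assms(1-3) that by blast
  show "\<exists>u. (u \<in> span {a i} \<and> u \<noteq> 0) \<and> w - u \<in> span {c i}"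
    if w: "w \<in> span {a (i+1)} \<and> w \<noteq> 0" for i w
  proof -
    have "c i \<in> span {a (i+1), a i}" using assms(1) by (simp add: insert_commute)
    then obtain u where "u \<in> span {a i}" "u \<noteq> 0" "u - w \<in> span {c i}"
      using lift_across_centre[OF _ assms(3) assms(2)] w by blast
    moreover have "w - u = - (u - w)" by simp
    ultimately show ?thesis using span_neg by metis
  qed
qed

section \<open>Projective incidence\<close>

lemma proj_collinear_commute:
  "proj_collinear a b c \<longleftrightarrow> proj_collinear b a c"
  "proj_collinear a b c \<longleftrightarrow> proj_collinear a c b"
  by (simp_all add: proj_collinear_def insert_commute)

lemma proj_collinear_if_subset_span:
  fixes a b c u v :: "real^'m"
  assumes "{a, b, c} \<subseteq> span {u, v}"
  shows "proj_collinear a b c"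
proof -
  have "dim {a, b, c} \<le> card {u, v}" using assms by (rule dim_le_card) simp
  also have "\<dots> \<le> 2" by (simp add: card_insert_le_m1)
  finally show ?thesis by (simp add: proj_collinear_def)
qed

lemma proj_coplanar_if_subset_span:
  fixes a b c d u v w :: "real^'m"
  assumes "{a, b, c, d} \<subseteq> span {u, v, w}"
  shows "proj_coplanar a b c d"
proof -
  have "dim {a, b, c, d} \<le> card {u, v, w}" using assms by (rule dim_le_card) simp
  also have "\<dots> \<le> 3" by (simp add: card_insert_le_m1)
  finally show ?thesis by (simp add: proj_coplanar_def)
qed

lemma not_in_span_if_not_proj_collinear:
  fixes a b c :: "real^'m"
  assumes "\<not> proj_collinear a b c"
  shows "a \<notin> span {b, c}" "b \<notin> span {a, c}" "c \<notin> span {a, b}"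
  using assms proj_collinear_if_subset_span[of a b c b c] proj_collinear_if_subset_span[of a b c a c]
    proj_collinear_if_subset_span[of a b c a b]
  by (auto intro: span_base)

lemma dim_pair_if_not_proj_collinear:
  fixes a b c :: "real^'m"
  assumes "\<not> proj_collinear a b c"
  shows "dim {a, b} = 2"
proof -
  have "dim {a, b} \<le> card {a, b}" by (rule dim_le_card) (auto intro: span_base)
  also have "\<dots> \<le> 2" by (simp add: card_insert_le_m1)
  finally have "dim {a, b} \<le> 2" .
  moreover have "{a, b, c} = insert c {a, b}" by blast
  then have "3 \<le> dim (insert c {a, b})" using assms by (simp add: proj_collinear_def)
  moreover have "dim (insert c {a, b}) \<le> dim {a, b} + 1" by (simp add: dim_insert)
  ultimately show ?thesis by linarith
qed

lemma proj_collinear_iff_in_span: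
  fixes a b c :: "real^'m"
  assumes "dim {a, b} = 2"
  shows "proj_collinear a b c \<longleftrightarrow> c \<in> span {a, b}"
proof -
  have "{a, b, c} = insert c {a, b}" by blast
  then show ?thesis using assms by (simp add: proj_collinear_def dim_insert)
qed

lemma in_perspective_iff_common_point:
  fixes P Q :: "int \<Rightarrow> real^'m"
  assumes "\<And>k. dim {P k, Q k} = 2"
  shows "in_perspective P Q \<longleftrightarrow> (\<exists>c. c \<noteq> 0 \<and> (\<forall>k. c \<in> span {P k, Q k}))"
  using assms by (simp add: in_perspective_def proj_collinear_iff_in_span)

lemma proj_eq_iff_span_eq:
  fixes u v :: "real^'m"
  shows "proj_eq u v \<longleftrightarrow> u \<noteq> 0 \<and> v \<noteq> 0 \<and> span {u} = span {v}"
proof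
  assume "proj_eq u v"
  then obtain k where "u \<noteq> 0" "v \<noteq> 0" "u = k *\<^sub>R v" by (auto simp: proj_eq_def)
  then show "u \<noteq> 0 \<and> v \<noteq> 0 \<and> span {u} = span {v}"
    using span_singleton_eq[of u v] by (simp add: span_base span_scale)
next
  assume H: "u \<noteq> 0 \<and> v \<noteq> 0 \<and> span {u} = span {v}"
  then have "u \<in> span {v}" using span_base[of u "{u}"] by simp
  then obtain k where "u = k *\<^sub>R v" by (auto simp: span_singleton)
  with H show "proj_eq u v" by (auto simp: proj_eq_def)
qed

lemma proj_coplanar_lines_meet:
  fixes a b c d :: "real^'m"
  assumes "proj_coplanar a b c d" "dim {a, b} = 2" "dim {c, d} = 2"
  shows "\<exists>v. v \<noteq> 0 \<and> v \<in> span {a, b} \<inter> span {c, d}"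
proof (rule two_dim_subspaces_meet)
  have "{a, b, c, d} = {a, b} \<union> {c, d}" by blast
  then show "dim (span {a, b} \<union> span {c, d}) \<le> 3"
    using assms(1) dim_span[of "span {a, b} \<union> span {c, d}"]
    by (simp add: span_Un_span proj_coplanar_def)
qed (simp_all add: assms(2,3))

lemma proj_coplanar_cong_set:
  "{a, b, c, d} = {a', b', c', d'} \<Longrightarrow> proj_coplanar a b c d \<longleftrightarrow> proj_coplanar a' b' c' d'"
  by (simp add: proj_coplanar_def)

lemma general_position_swap:
  "general_position x \<Longrightarrow> general_position (\<lambda>i j. x j i)"
  unfolding general_position_def by (simp add: Un_commute) (metis proj_collinear_commute)

lemma Q_net_swap: "Q_net x \<Longrightarrow> Q_net (\<lambda>i j. x j i)"
  unfolding Q_net_def proj_net_def proj_coplanar_def by (auto simp: insert_commute)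

lemma multi_Q_net_swap: "multi_Q_net x \<Longrightarrow> multi_Q_net (\<lambda>i j. x j i)"
  unfolding multi_Q_net_def proj_net_def proj_coplanar_def by (auto simp: insert_commute)

lemma laplace2_eq_laplace1_swap: "laplace2 x i j = laplace1 (\<lambda>i j. x j i) j i"
  by (simp add: laplace1_def laplace2_def)

lemma general_position_dim_edges:
  assumes "general_position x"
  shows "dim {x i j, x (i+1) j} = 2" "dim {x i j, x i (j+1)} = 2"
  using assms unfolding general_position_def
  by (metis dim_pair_if_not_proj_collinear proj_collinear_commute(2))+

lemma general_position_not_in_span:
  assumes "general_position x"
  shows "x i j \<notin> span {x (i+1) j, x (i+1) (j+1)}"
    and "x i j \<notin> span {x i (j+1), x (i+1) (j+1)}"
    and "x i (j+1) \<notin> span {x i j, x (i+1) j}"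
    and "x i (j+1) \<notin> span {x (i+1) j, x (i+1) (j+1)}"
    and "x (i+1) j \<notin> span {x i (j+1), x (i+1) (j+1)}"
    and "x i j \<notin> span {x (i+1) (j+1), x (i+1) j}"
    and "x i j \<notin> span {x (i+1) (j+1), x i (j+1)}"
    and "x i (j+1) \<notin> span {x (i+1) j, x i j}"
    and "x i (j+1) \<notin> span {x (i+1) (j+1), x (i+1) j}"
  using assms unfolding general_position_def
  by (metis insert_commute not_in_span_if_not_proj_collinear)+

section \<open>Translation nets\<close>

lemma multi_Q_net_if_proj_eq_sum:
  fixes x :: "int \<Rightarrow> int \<Rightarrow> real^'m"
  assumes "\<And>i j. proj_eq (x i j) (p i + q j)"
  shows "multi_Q_net x"
proof -
  have x: "x i j \<noteq> 0" "x i j \<in> span {p i + q j}" for i j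
    using assms[of i j] span_base[of "x i j" "{x i j}"] by (auto simp: proj_eq_iff_span_eq)
  have "proj_coplanar (x i0 j0) (x i0 j1) (x i1 j1) (x i1 j0)" for i0 i1 j0 j1
  proof (rule proj_coplanar_if_subset_span)
    let ?S = "span {p i0 + q j0, p i0 + q j1, p i1 + q j1}"
    have "p i1 + q j0 = (p i0 + q j0) - (p i0 + q j1) + (p i1 + q j1)" by simp
    then have "p i1 + q j0 \<in> ?S" by (metis span_add span_diff span_base insertI1 insertI2)
    then have "p i + q j \<in> ?S" if "i \<in> {i0, i1}" "j \<in> {j0, j1}" for i j
      using that by (auto intro: span_base)
    then have "x i j \<in> ?S" if "i \<in> {i0, i1}" "j \<in> {j0, j1}" for i j
      using that x(2) span_minimal[of "{p i + q j}" ?S] by blast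
    then show "{x i0 j0, x i0 j1, x i1 j1, x i1 j0} \<subseteq> ?S" by auto
  qed
  with x(1) show ?thesis by (simp add: multi_Q_net_def proj_net_def)
qed

lemma in_perspective_if_proj_eq_sum:
  fixes x :: "int \<Rightarrow> int \<Rightarrow> real^'m"
  assumes "\<And>i j. proj_eq (x i j) (p i + q j)"
  shows "in_perspective (x i0) (x i1)"
proof -
  \<comment> \<open>if \<open>p i0 = p i1\<close> the two polygons coincide pointwise and any point is a centre\<close>
  define c where "c = (if p i0 = p i1 then x 0 0 else p i0 - p i1)"
  have x: "x i j \<in> span {p i + q j}" for i j
    using assms[of i j] span_base[of "x i j" "{x i j}"] by (auto simp: proj_eq_iff_span_eq)
  have "c \<noteq> 0" using assms[of 0 0] by (simp add: c_def proj_eq_def)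
  moreover have "proj_collinear (x i0 k) (x i1 k) c" for k
  proof (rule proj_collinear_if_subset_span)
    let ?S = "span {p i0 + q k, c}"
    have P0: "p i0 + q k \<in> ?S" and c: "c \<in> ?S" by (simp_all add: span_base)
    have "p i1 + q k \<in> ?S"
    proof (cases "p i0 = p i1")
      case True
      then show ?thesis using P0 by simp
    next
      case False
      then have "p i1 + q k = (p i0 + q k) - c" by (simp add: c_def)
      then show ?thesis using P0 c span_diff by metis
    qed
    then show "{x i0 k, x i1 k, c} \<subseteq> ?S"
      using P0 c x in_span_trans by blast
  qed
  ultimately show ?thesis unfolding in_perspective_def by blast
qed

lemma laplace1_if_proj_eq_sum:
  fixes x :: "int \<Rightarrow> int \<Rightarrow> real^'m"
  assumes GP: "general_position x" and "\<And>i j. proj_eq (x i j) (p i + q j)"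
  shows "laplace1 x i j = span {p (i+1) - p i}"
proof -
  let ?e = "p (i+1) - p i"
  have span_x: "span {x k l} = span {p k + q l}" for k l
    using assms(2) by (simp add: proj_eq_iff_span_eq)
  have line: "span {x i l, x (i+1) l} = span {p i + q l, ?e}" for l
  proof -
    have "span {x i l, x (i+1) l} = span {p (i+1) + q l, p i + q l}"
      using span_pair_cong[of "x (i+1) l" "p (i+1) + q l" "x i l" "p i + q l"] span_x
      by (simp add: insert_commute[of "x i l"] insert_commute[of "p i + q l"])
    also have "\<dots> = span {?e, p i + q l}" by (rule eq_span_insert_eq) (simp add: span_base)
    finally show ?thesis by (simp only: insert_commute[of ?e])
  qed
  have "x i j \<notin> span {x i (j+1), x (i+1) (j+1)}" by (rule general_position_not_in_span(2)[OF GP])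
  moreover have "x i j \<in> span {p i + q j}" using span_x span_base[of "x i j" "{x i j}"] by simp
  ultimately have "p i + q j \<notin> span (insert (p i + q (j+1)) {?e})"
    using line[of "j+1"] in_span_trans by auto
  then show ?thesis
    unfolding laplace1_def line by (rule span_insert_Int_span_insert)
qed

lemma sum_represents_vertex_if_represents_axes:
  fixes x :: "int \<Rightarrow> int \<Rightarrow> real^'m"
  assumes GP: "general_position x"
    and edge_i: "\<And>i j. p (i+1) - p i \<in> span {x i j, x (i+1) j}"
    and edge_j: "\<And>i j. q (j+1) - q j \<in> span {x i j, x i (j+1)}"
    and axis_i: "\<And>i. p i + q 0 \<in> span {x i 0} \<and> p i + q 0 \<noteq> 0"
    and axis_j: "\<And>j. p 0 + q j \<in> span {x 0 j} \<and> p 0 + q j \<noteq> 0"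
  shows "p i + q j \<in> span {x i j} \<and> p i + q j \<noteq> 0"
proof -
  define R where "R i j \<longleftrightarrow> p i + q j \<in> span {x i j} \<and> p i + q j \<noteq> 0" for i j
  note gp = general_position_not_in_span[OF GP]
  have edge_i': "p i - p (i+1) \<in> span {x (i+1) j, x i j}" for i j
  proof -
    have "p (i+1) - p i \<in> span {x i j, x (i+1) j}" by (rule edge_i)
    from span_neg[OF this] show ?thesis by (simp add: insert_commute[of "x i j"])
  qed
  have edge_j': "q j - q (j+1) \<in> span {x i (j+1), x i j}" for i j
  proof -
    have "q (j+1) - q j \<in> span {x i j, x i (j+1)}" by (rule edge_j)
    from span_neg[OF this] show ?thesis by (simp add: insert_commute[of "x i j"])
  qed
  have "R i j"
  proof (rule int_grid_induct[of R])
    show "R i 0" "R 0 j" for i j using axis_i axis_j by (simp_all add: R_def)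
    show "R (i+1) (j+1)" if "R i j" "R (i+1) j" "R i (j+1)" for i j
      unfolding R_def
      by (rule parallelogram_fourth_vertex[where a = "x i j" and b = "x (i+1) j" and d = "x i (j+1)"
          and A = "p i + q j" and B = "p (i+1) + q j" and D = "p i + q (j+1)"])
        (use that[unfolded R_def] gp edge_i edge_j in auto)
    show "R (i+1) j" if "R i j" "R i (j+1)" "R (i+1) (j+1)" for i j
      unfolding R_def
      by (rule parallelogram_fourth_vertex[where a = "x i (j+1)" and b = "x (i+1) (j+1)" and d = "x i j"
          and A = "p i + q (j+1)" and B = "p (i+1) + q (j+1)" and D = "p i + q j"])
        (use that[unfolded R_def] gp edge_i edge_j' in auto)
    show "R i (j+1)" if "R i j" "R (i+1) j" "R (i+1) (j+1)" for i j
      unfolding R_def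
      by (rule parallelogram_fourth_vertex[where a = "x (i+1) j" and b = "x (i+1) (j+1)" and d = "x i j"
          and A = "p (i+1) + q j" and B = "p (i+1) + q (j+1)" and D = "p i + q j"])
        (use that[unfolded R_def] gp edge_i' edge_j in auto)
    show "R i j" if "R (i+1) j" "R i (j+1)" "R (i+1) (j+1)" for i j
      unfolding R_def
      by (rule parallelogram_fourth_vertex[where a = "x (i+1) (j+1)" and b = "x (i+1) j" and d = "x i (j+1)"
          and A = "p (i+1) + q (j+1)" and B = "p (i+1) + q j" and D = "p i + q (j+1)"])
        (use that[unfolded R_def] gp edge_i' edge_j' in auto)
  qed
  then show ?thesis by (simp add: R_def)
qed

lemma proj_eq_sum_if_neighbours_in_perspective:
  fixes x :: "int \<Rightarrow> int \<Rightarrow> real^'m"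
  assumes PN: "proj_net x" and GP: "general_position x"
    and rows: "\<And>i. in_perspective (x i) (x (i+1))"
    and cols: "\<And>j. in_perspective (\<lambda>i. x i j) (\<lambda>i. x i (j+1))"
  shows "\<exists>p q. \<forall>i j. proj_eq (x i j) (p i + q j)"
proof -
  note dims = general_position_dim_edges[OF GP] and gp = general_position_not_in_span[OF GP]
  have x0: "x i j \<noteq> 0" for i j using PN by (simp add: proj_net_def)
  obtain c where c: "\<And>i. c i \<noteq> 0" "\<And>i j. c i \<in> span {x i j, x (i+1) j}"
    using rows unfolding in_perspective_iff_common_point[OF dims(1)] by metis
  obtain d where d: "\<And>j. d j \<noteq> 0" "\<And>i j. d j \<in> span {x i j, x i (j+1)}"
    using cols unfolding in_perspective_iff_common_point[OF dims(2)] by metis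
  obtain A where A: "A 0 = x 0 0" "\<And>i. A i \<in> span {x i 0} \<and> A i \<noteq> 0"
    "\<And>i. A (i+1) - A i \<in> span {c i}"
  proof -
    have "c i \<notin> span {x i 0}" "c i \<notin> span {x (i+1) 0}" for i
      using not_in_span_singleton_if_not_in_span[OF c(1) c(2)[where j = 1]] gp(2)[of i 0] gp(5)[of i 0] by simp_all
    then show ?thesis
      using lift_polygon_through_centres[of c "\<lambda>i. x i 0"] c(2) x0 that by blast
  qed
  obtain B where B: "B 0 = x 0 0" "\<And>j. B j \<in> span {x 0 j} \<and> B j \<noteq> 0"
    "\<And>j. B (j+1) - B j \<in> span {d j}"
  proof -
    have "d j \<notin> span {x 0 j}" "d j \<notin> span {x 0 (j+1)}" for j
      using not_in_span_singleton_if_not_in_span[OF d(1) d(2)[where i = 1]] gp(1)[of 0 j] gp(4)[of 0 j] by simp_all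
    then show ?thesis
      using lift_polygon_through_centres[of d "\<lambda>j. x 0 j"] d(2) x0 that by blast
  qed
  define q where "q j = B j - x 0 0" for j
  have lift: "A i + q j \<in> span {x i j} \<and> A i + q j \<noteq> 0" for i j
  proof (rule sum_represents_vertex_if_represents_axes[OF GP])
    show "A (i+1) - A i \<in> span {x i j, x (i+1) j}" for i j
      using in_span_trans[OF A(3) c(2)] .
    show "q (j+1) - q j \<in> span {x i j, x i (j+1)}" for i j
      using in_span_trans[OF B(3) d(2)] by (simp add: q_def)
  qed (use A B in \<open>simp_all add: q_def\<close>)
  have "proj_eq (x i j) (A i + q j)" for i j
    using x0 lift span_singleton_eq[of "A i + q j" "x i j"] by (simp add: proj_eq_iff_span_eq)
  then show ?thesis by blast
qed

section \<open>Perspective parameter lines\<close>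

lemma in_perspective_if_laplace1_constant:
  fixes x :: "int \<Rightarrow> int \<Rightarrow> real^'m"
  assumes QN: "Q_net x" and GP: "general_position x"
    and L: "\<And>j j'. laplace1 x i j = laplace1 x i j'"
  shows "in_perspective (x i) (x (i+1))"
proof -
  have swap: "{x (i+1) 1, x i 1} = {x i 1, x (i+1) 1}" by blast
  have "proj_coplanar (x i 0) (x (i+1) 0) (x (i+1) 1) (x i 1)"
    using QN unfolding Q_net_def by (metis add.left_neutral)
  moreover have "dim {x (i+1) 1, x i 1} = 2" "dim {x i 0, x (i+1) 0} = 2"
    unfolding swap using general_position_dim_edges(1)[OF GP] by blast+
  ultimately obtain v where "v \<noteq> 0" "v \<in> span {x i 0, x (i+1) 0} \<inter> span {x (i+1) 1, x i 1}"
    using proj_coplanar_lines_meet by blast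
  then have "v \<noteq> 0" "v \<in> laplace1 x i 0" unfolding laplace1_def swap by simp_all
  then have "v \<noteq> 0 \<and> (\<forall>j. v \<in> span {x i j, x (i+1) j})"
    using L unfolding laplace1_def by blast
  then show ?thesis
    using in_perspective_iff_common_point general_position_dim_edges(1)[OF GP] by blast
qed

lemma in_perspective_if_multi_Q_net:
  fixes x :: "int \<Rightarrow> int \<Rightarrow> real^'m"
  assumes MQ: "multi_Q_net x" and GP: "general_position x"
  shows "in_perspective (x i) (x (i+1))"
proof -
  define L where "L j = span {x i j, x (i+1) j}" for j
  have dim2: "dim (L j) = 2" for j
    unfolding L_def dim_span by (rule general_position_dim_edges(1)[OF GP])
  have meet: "\<exists>v. v \<noteq> 0 \<and> v \<in> L j \<inter> L k" for j k
  proof (cases "j = k")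
    case True
    then show ?thesis using MQ by (auto simp: L_def multi_Q_net_def proj_net_def intro: span_base)
  next
    case False
    then have "proj_coplanar (x i j) (x i k) (x (i+1) k) (x (i+1) j)"
      using MQ by (simp add: multi_Q_net_def)
    then have "proj_coplanar (x i j) (x (i+1) j) (x i k) (x (i+1) k)"
      by (rule proj_coplanar_cong_set[THEN iffD1, rotated]) blast
    then show ?thesis
      unfolding L_def using proj_coplanar_lines_meet general_position_dim_edges(1)[OF GP] by blast
  qed
  have "x i 1 \<in> L 1" "x i 1 \<notin> L 0"
    using general_position_not_in_span(3)[OF GP, of i 0] by (simp_all add: L_def span_base)
  then have "L 0 \<noteq> L 1" by blast
  moreover have "\<not> (\<forall>j. L j \<subseteq> span (L 0 \<union> L 1))"
  proof
    assume all: "\<forall>j. L j \<subseteq> span (L 0 \<union> L 1)"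
    have "range (x i) \<union> range (x (i+1)) \<subseteq> span (L 0 \<union> L 1)"
      using all by (auto simp: L_def intro: span_base)
    then have "dim (range (x i) \<union> range (x (i+1))) \<le> dim (L 0 \<union> L 1)" by (rule dim_mono)
    also have "\<dots> = dim {x i 0, x i 1, x (i+1) 1, x (i+1) 0}"
    proof -
      have "{x i 0, x (i+1) 0} \<union> {x i 1, x (i+1) 1} = {x i 0, x i 1, x (i+1) 1, x (i+1) 0}" by blast
      then show ?thesis
        using dim_span[of "L 0 \<union> L 1"] span_Un_span[of "{x i 0, x (i+1) 0}" "{x i 1, x (i+1) 1}"]
        by (simp add: L_def)
    qed
    also have "\<dots> \<le> 3"
      using MQ unfolding multi_Q_net_def proj_coplanar_def by force
    finally have "dim (range (x i) \<union> range (x (i+1))) \<le> 3" .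
    moreover have "4 \<le> dim (range (x i) \<union> range (x (i+1)))"
      using GP unfolding general_position_def by blast
    ultimately show False by linarith
  qed
  ultimately obtain c where "c \<noteq> 0" "\<forall>j. c \<in> L j"
    using pairwise_meeting_lines_concurrent_or_coplanar[of L 0 1] dim2 meet by (auto simp: L_def)
  then show ?thesis
    unfolding in_perspective_iff_common_point[OF general_position_dim_edges(1)[OF GP]] L_def by blast
qed

theorem theorem2p3:
  fixes x :: "int \<Rightarrow> int \<Rightarrow> real^'m"
  assumes "Q_net x" and "general_position x"
  shows "(multi_Q_net x \<longleftrightarrow>
           ((\<forall>i0 i1. i0 \<noteq> i1 \<longrightarrow> in_perspective (x i0) (x i1)) \<and>
            (\<forall>j0 j1. j0 \<noteq> j1 \<longrightarrow> in_perspective (\<lambda>i. x i j0) (\<lambda>i. x i j1))))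
       \<and> (multi_Q_net x \<longleftrightarrow>
           ((\<forall>i. in_perspective (x i) (x (i+1))) \<and>
            (\<forall>j. in_perspective (\<lambda>i. x i j) (\<lambda>i. x i (j+1)))))
       \<and> (multi_Q_net x \<longleftrightarrow>
           (\<exists>p q :: int \<Rightarrow> real^'m. \<forall>i j. proj_eq (x i j) (p i + q j)))
       \<and> (multi_Q_net x \<longleftrightarrow>
           ((\<forall>i j j'. laplace1 x i j = laplace1 x i j') \<and>
            (\<forall>i i' j. laplace2 x i j = laplace2 x i' j)))"
proof -
  note QN = assms(1) and GP = assms(2)
  note QN' = Q_net_swap[OF QN] and GP' = general_position_swap[OF GP]
  have PN: "proj_net x" using QN by (simp add: Q_net_def)
  let ?iii = "(\<forall>i. in_perspective (x i) (x (i+1))) \<and> (\<forall>j. in_perspective (\<lambda>i. x i j) (\<lambda>i. x i (j+1)))"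
  let ?iv = "\<exists>p q :: int \<Rightarrow> real^'m. \<forall>i j. proj_eq (x i j) (p i + q j)"
  have iii_iv: ?iv if ?iii
    using proj_eq_sum_if_neighbours_in_perspective[OF PN GP] that by blast
  have i_iii: ?iii if "multi_Q_net x"
    using in_perspective_if_multi_Q_net[OF that GP]
      in_perspective_if_multi_Q_net[OF multi_Q_net_swap[OF that] GP'] by simp
  have v_iii: ?iii if "\<forall>i j j'. laplace1 x i j = laplace1 x i j'" "\<forall>i i' j. laplace2 x i j = laplace2 x i' j"
    using in_perspective_if_laplace1_constant[OF QN GP] that(1)
      in_perspective_if_laplace1_constant[OF QN' GP'] that(2)
    unfolding laplace2_eq_laplace1_swap by simp
  have iv_all: "multi_Q_net x \<and> (\<forall>i0 i1. in_perspective (x i0) (x i1))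
      \<and> (\<forall>j0 j1. in_perspective (\<lambda>i. x i j0) (\<lambda>i. x i j1))
      \<and> (\<forall>i j j'. laplace1 x i j = laplace1 x i j') \<and> (\<forall>i i' j. laplace2 x i j = laplace2 x i' j)"
    if ?iv
  proof -
    obtain p q where pq: "\<And>i j. proj_eq (x i j) (p i + q j)" using \<open>?iv\<close> by blast
    then have qp: "\<And>j i. proj_eq (x i j) (q j + p i)" by (simp add: add.commute)
    show ?thesis
      using multi_Q_net_if_proj_eq_sum[where x = x, OF pq]
        in_perspective_if_proj_eq_sum[where x = x, OF pq]
        in_perspective_if_proj_eq_sum[where x = "\<lambda>i j. x j i", OF qp]
        laplace1_if_proj_eq_sum[OF GP pq] laplace1_if_proj_eq_sum[OF GP' qp]
      unfolding laplace2_eq_laplace1_swap by simp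
  qed
  have ii_iii: ?iii if "\<forall>i0 i1. i0 \<noteq> i1 \<longrightarrow> in_perspective (x i0) (x i1)"
    "\<forall>j0 j1. j0 \<noteq> j1 \<longrightarrow> in_perspective (\<lambda>i. x i j0) (\<lambda>i. x i j1)"
    using that by simp
  show ?thesis using i_iii ii_iii iii_iv iv_all v_iii by blast
qed

end
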